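(* Consider the wound-string system $\ddot x_1+2G^1(x,\dot x)=0$, $\ddot x_2+2G^2(x,\dot x)=0$ with $$G^1=\frac{x_1}{2a^2x_1^2+2m^2x_2^2}\Big[a^2(1-y_1^2)-y_2^2-C^2\frac{(a^2x_1^2+m^2x_2^2)^2}{x_1^4x_2^2}\Big],\quad G^2=\frac{x_2}{2a^2x_1^2+2m^2x_2^2}\Big[m^2\big(a^2(1-y_1^2)-y_2^2\big)-a^2C^2\frac{(a^2x_1^2+m^2x_2^2)^2}{x_1^2x_2^4}\Big],$$ where $y_i=\dot x_i$ and $a,C,m$ are real parameters with $0<a^2\le 1$. Then for no such parameter values does the system have exactly one, exactly two, or exactly three Jacobi stable fixed points; and whenever $m\neq0$, $C\neq 0$ and $a^2\neq 1$, the system has exactly four Jacobi stable fixed points.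
   Context: Fixed points are points $(x_1,x_2)$ with $x_1\neq0$, $x_2\neq0$ such that $G^1(x,0)=G^2(x,0)=0$. Einstein summation is used. $N^i_j=\partial G^i/\partial y_j$, $G^i_{j\ell}=\partial N^i_j/\partial y_\ell$, and the deviation curvature tensor is $P^i_j=-2\frac{\partial G^i}{\partial x_j}-2G^\ell G^i_{j\ell}+y_\ell\frac{\partial N^i_j}{\partial x_\ell}+N^i_\ell N^\ell_j$. A fixed point $\bar x$ is Jacobi stable if all eigenvalues of the $2\times2$ matrix $(P^i_j)$ evaluated at $(x,y)=(\bar x,0)$ have strictly negative real parts. *)

theory Defs
  imports "HOL-Analysis.Analysis"
begin

definition comp2 :: "real \<times> real \<Rightarrow> nat \<Rightarrow> real" where
  "comp2 p j = (if j = 1 then fst p else snd p)"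

definition upd2 :: "real \<times> real \<Rightarrow> nat \<Rightarrow> real \<Rightarrow> real \<times> real" where
  "upd2 p j t = (if j = 1 then (t, snd p) else (fst p, t))"

definition pdx :: "(real \<times> real \<Rightarrow> real \<times> real \<Rightarrow> real) \<Rightarrow> nat \<Rightarrow> real \<times> real \<Rightarrow> real \<times> real \<Rightarrow> real" where
  "pdx f j x y = deriv (\<lambda>t. f (upd2 x j t) y) (comp2 x j)"

definition pdy :: "(real \<times> real \<Rightarrow> real \<times> real \<Rightarrow> real) \<Rightarrow> nat \<Rightarrow> real \<times> real \<Rightarrow> real \<times> real \<Rightarrow> real" where
  "pdy f j x y = deriv (\<lambda>t. f x (upd2 y j t)) (comp2 y j)"

definition Gws :: "real \<Rightarrow> real \<Rightarrow> real \<Rightarrow> nat \<Rightarrow> real \<times> real \<Rightarrow> real \<times> real \<Rightarrow> real" where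
  "Gws a C m i x y =
     (let x1 = fst x; x2 = snd x; y1 = fst y; y2 = snd y;
          Q = a\<^sup>2 * x1\<^sup>2 + m\<^sup>2 * x2\<^sup>2 in
      if i = 1 then
        x1 / (2 * a\<^sup>2 * x1\<^sup>2 + 2 * m\<^sup>2 * x2\<^sup>2) *
          (a\<^sup>2 * (1 - y1\<^sup>2) - y2\<^sup>2 - C\<^sup>2 * Q\<^sup>2 / (x1 ^ 4 * x2\<^sup>2))
      else
        x2 / (2 * a\<^sup>2 * x1\<^sup>2 + 2 * m\<^sup>2 * x2\<^sup>2) *
          (m\<^sup>2 * (a\<^sup>2 * (1 - y1\<^sup>2) - y2\<^sup>2) - a\<^sup>2 * C\<^sup>2 * Q\<^sup>2 / (x1\<^sup>2 * x2 ^ 4)))"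

definition Ncoef :: "(nat \<Rightarrow> real \<times> real \<Rightarrow> real \<times> real \<Rightarrow> real) \<Rightarrow> nat \<Rightarrow> nat \<Rightarrow> real \<times> real \<Rightarrow> real \<times> real \<Rightarrow> real" where
  "Ncoef G i j x y = pdy (G i) j x y"

definition Bcoef :: "(nat \<Rightarrow> real \<times> real \<Rightarrow> real \<times> real \<Rightarrow> real) \<Rightarrow> nat \<Rightarrow> nat \<Rightarrow> nat \<Rightarrow> real \<times> real \<Rightarrow> real \<times> real \<Rightarrow> real" where
  "Bcoef G i j l x y = pdy (Ncoef G i j) l x y"

definition Pdev :: "(nat \<Rightarrow> real \<times> real \<Rightarrow> real \<times> real \<Rightarrow> real) \<Rightarrow> nat \<Rightarrow> nat \<Rightarrow> real \<times> real \<Rightarrow> real \<times> real \<Rightarrow> real" where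
  "Pdev G i j x y =
     - 2 * pdx (G i) j x y
     - 2 * (\<Sum>l\<in>{1,2}. G l x y * Bcoef G i j l x y)
     + (\<Sum>l\<in>{1,2}. comp2 y l * pdx (Ncoef G i j) l x y)
     + (\<Sum>l\<in>{1,2}. Ncoef G i l x y * Ncoef G l j x y)"

definition fixed_point :: "(nat \<Rightarrow> real \<times> real \<Rightarrow> real \<times> real \<Rightarrow> real) \<Rightarrow> real \<times> real \<Rightarrow> bool" where
  "fixed_point G x \<longleftrightarrow> fst x \<noteq> 0 \<and> snd x \<noteq> 0 \<and> G 1 x (0, 0) = 0 \<and> G 2 x (0, 0) = 0"

definition jacobi_stable :: "(nat \<Rightarrow> real \<times> real \<Rightarrow> real \<times> real \<Rightarrow> real) \<Rightarrow> real \<times> real \<Rightarrow> bool" where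
  "jacobi_stable G x \<longleftrightarrow>
     (\<forall>z::complex.
        (complex_of_real (Pdev G 1 1 x (0, 0)) - z) * (complex_of_real (Pdev G 2 2 x (0, 0)) - z)
        - complex_of_real (Pdev G 1 2 x (0, 0)) * complex_of_real (Pdev G 2 1 x (0, 0)) = 0
        \<longrightarrow> Re z < 0)"

end

theory Submission
  imports Defs
begin

text \<open>
  Both spray coefficients depend on the velocity only through \<open>y\<^sub>1\<^sup>2\<close> and \<open>y\<^sub>2\<^sup>2\<close>, so the
  nonlinear connection vanishes at rest and the deviation curvature at a fixed point reduces
  to \<open>-2 \<partial>G\<^sup>i/\<partial>x\<^sub>j\<close>. Solving \<open>G(x,0) = 0\<close> gives \<open>x\<^sub>1\<^sup>2 = 4C\<^sup>2m\<^sup>2\<close> and \<open>x\<^sub>2\<^sup>2 = 4C\<^sup>2a\<^sup>2\<close>, and there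
  the curvature matrix is triangular with diagonal \<open>-1/x\<^sub>1\<^sup>2\<close> and \<open>-m\<^sup>2/x\<^sub>1\<^sup>2\<close>. Hence every
  fixed point is Jacobi stable, and there are either none (if \<open>m = 0\<close> or \<open>C = 0\<close>) or exactly
  the four points \<open>(\<plusminus>2Cm, \<plusminus>2Ca)\<close>.
\<close>

lemma Pdev_at_rest:
  assumes "fixed_point G x" and "\<And>i j. Ncoef G i j x (0, 0) = 0"
  shows "Pdev G i j x (0, 0) = - 2 * pdx (G i) j x (0, 0)"
  using assms by (simp add: Pdev_def fixed_point_def comp2_def)

lemma jacobi_stable_triangular:
  assumes "Pdev G 2 1 x (0, 0) = 0"
    and "Pdev G 1 1 x (0, 0) < 0" and "Pdev G 2 2 x (0, 0) < 0"
  shows "jacobi_stable G x"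
  unfolding jacobi_stable_def
proof (intro allI impI)
  fix z :: complex
  assume "(complex_of_real (Pdev G 1 1 x (0, 0)) - z) * (complex_of_real (Pdev G 2 2 x (0, 0)) - z)
    - complex_of_real (Pdev G 1 2 x (0, 0)) * complex_of_real (Pdev G 2 1 x (0, 0)) = 0"
  then have "z = complex_of_real (Pdev G 1 1 x (0, 0)) \<or> z = complex_of_real (Pdev G 2 2 x (0, 0))"
    using assms(1) by auto
  then show "Re z < 0"
    using assms(2,3) by auto
qed

lemma pdy_at_rest_quadratic:
  assumes "\<And>y. f x y = c + p * (fst y)\<^sup>2 + q * (snd y)\<^sup>2"
  shows "pdy f j x (0, 0) = 0"
proof -
  let ?r = "if j = 1 then p else q"
  have "(\<lambda>t. f x (upd2 (0, 0) j t)) = (\<lambda>t. c + ?r * t\<^sup>2)"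
    by (simp add: assms upd2_def)
  moreover have "((\<lambda>t. c + ?r * t\<^sup>2) has_real_derivative 0) (at 0)"
    by (auto intro!: derivative_eq_intros)
  ultimately have "deriv (\<lambda>t. f x (upd2 (0, 0) j t)) 0 = 0"
    by (metis DERIV_imp_deriv)
  moreover have "comp2 (0, 0) j = 0"
    by (simp add: comp2_def)
  ultimately show ?thesis
    by (simp add: pdy_def)
qed

lemma Gws_quadratic_velocity:
  "\<exists>c p q. \<forall>y. Gws a C m i x y = c + p * (fst y)\<^sup>2 + q * (snd y)\<^sup>2"
proof -
  define k where "k = (if i = 1 then fst x else snd x) / (2*a\<^sup>2*(fst x)\<^sup>2 + 2*m\<^sup>2*(snd x)\<^sup>2)"
  define s where "s = (if i = 1 then 1 else m\<^sup>2)"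
  show ?thesis
    by (rule exI[of _ "Gws a C m i x (0, 0)"], rule exI[of _ "- k * s * a\<^sup>2"], rule exI[of _ "- k * s"])
      (simp add: Gws_def k_def s_def Let_def algebra_simps)
qed

lemma Ncoef_Gws_at_rest: "Ncoef (Gws a C m) i j x (0, 0) = 0"
  using Gws_quadratic_velocity[of a C m i x] unfolding Ncoef_def
  by (auto intro: pdy_at_rest_quadratic)

lemma Gws_1_at_rest:
  "Gws a C m 1 (x1, x2) (0, 0) =
     x1 / (2*a\<^sup>2*x1\<^sup>2 + 2*m\<^sup>2*x2\<^sup>2) * (a\<^sup>2 - C\<^sup>2*(a\<^sup>2*x1\<^sup>2 + m\<^sup>2*x2\<^sup>2)\<^sup>2 / (x1^4*x2\<^sup>2))"
  by (simp add: Gws_def)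

lemma Gws_2_at_rest:
  "Gws a C m 2 (x1, x2) (0, 0) =
     x2 / (2*a\<^sup>2*x1\<^sup>2 + 2*m\<^sup>2*x2\<^sup>2) * (m\<^sup>2*a\<^sup>2 - a\<^sup>2*C\<^sup>2*(a\<^sup>2*x1\<^sup>2 + m\<^sup>2*x2\<^sup>2)\<^sup>2 / (x1\<^sup>2*x2^4))"
  by (simp add: Gws_def)

lemma Gws_at_rest_eq_0_iff:
  fixes a C m x1 x2 :: real
  assumes "a \<noteq> 0" "x1 \<noteq> 0" "x2 \<noteq> 0"
  defines "Q \<equiv> a\<^sup>2*x1\<^sup>2 + m\<^sup>2*x2\<^sup>2"
  shows "Gws a C m 1 (x1, x2) (0, 0) = 0 \<longleftrightarrow> a\<^sup>2*x1^4*x2\<^sup>2 = C\<^sup>2*Q\<^sup>2"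
    and "Gws a C m 2 (x1, x2) (0, 0) = 0 \<longleftrightarrow> m\<^sup>2*x1\<^sup>2*x2^4 = C\<^sup>2*Q\<^sup>2"
proof -
  have "Q > 0"
    unfolding Q_def using assms(1,2) by (simp add: add_pos_nonneg)
  moreover have "2*a\<^sup>2*x1\<^sup>2 + 2*m\<^sup>2*x2\<^sup>2 = 2*Q"
    unfolding Q_def by simp
  ultimately show "Gws a C m 1 (x1, x2) (0, 0) = 0 \<longleftrightarrow> a\<^sup>2*x1^4*x2\<^sup>2 = C\<^sup>2*Q\<^sup>2"
    and "Gws a C m 2 (x1, x2) (0, 0) = 0 \<longleftrightarrow> m\<^sup>2*x1\<^sup>2*x2^4 = C\<^sup>2*Q\<^sup>2"
    unfolding Gws_1_at_rest Gws_2_at_rest Q_def[symmetric] using assms(1-3)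
    by (auto simp: field_simps)
qed

lemma fixed_point_Gws_iff:
  assumes "a \<noteq> 0"
  shows "fixed_point (Gws a C m) (x1, x2) \<longleftrightarrow>
     x1 \<noteq> 0 \<and> x2 \<noteq> 0 \<and> x1\<^sup>2 = (2*C*m)\<^sup>2 \<and> x2\<^sup>2 = (2*C*a)\<^sup>2"
proof (cases "x1 \<noteq> 0 \<and> x2 \<noteq> 0")
  case True
  define Q where "Q = a\<^sup>2*x1\<^sup>2 + m\<^sup>2*x2\<^sup>2"
  have "a\<^sup>2*x1^4*x2\<^sup>2 = C\<^sup>2*Q\<^sup>2 \<and> m\<^sup>2*x1\<^sup>2*x2^4 = C\<^sup>2*Q\<^sup>2 \<longleftrightarrow>
        x1\<^sup>2 = (2*C*m)\<^sup>2 \<and> x2\<^sup>2 = (2*C*a)\<^sup>2"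
  proof
    assume eqs: "a\<^sup>2*x1^4*x2\<^sup>2 = C\<^sup>2*Q\<^sup>2 \<and> m\<^sup>2*x1\<^sup>2*x2^4 = C\<^sup>2*Q\<^sup>2"
    then have "(m\<^sup>2*x2\<^sup>2) * (x1\<^sup>2*x2\<^sup>2) = (a\<^sup>2*x1\<^sup>2) * (x1\<^sup>2*x2\<^sup>2)"
      by (simp add: power4_eq_xxxx power2_eq_square algebra_simps)
    then have balance: "m\<^sup>2*x2\<^sup>2 = a\<^sup>2*x1\<^sup>2"
      using True by simp
    then have "(a\<^sup>2*x1^4) * x2\<^sup>2 = (a\<^sup>2*x1^4) * (2*C*a)\<^sup>2"
      using eqs unfolding Q_def by (simp add: power4_eq_xxxx power2_eq_square algebra_simps)
    then have "x2\<^sup>2 = (2*C*a)\<^sup>2"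
      using True assms by simp
    moreover from this have "a\<^sup>2 * x1\<^sup>2 = a\<^sup>2 * (2*C*m)\<^sup>2"
      by (simp add: balance[symmetric] power_mult_distrib mult_ac)
    then have "x1\<^sup>2 = (2*C*m)\<^sup>2"
      by (metis assms mult_left_cancel power_not_zero)
    ultimately show "x1\<^sup>2 = (2*C*m)\<^sup>2 \<and> x2\<^sup>2 = (2*C*a)\<^sup>2"
      by simp
  next
    assume "x1\<^sup>2 = (2*C*m)\<^sup>2 \<and> x2\<^sup>2 = (2*C*a)\<^sup>2"
    then show "a\<^sup>2*x1^4*x2\<^sup>2 = C\<^sup>2*Q\<^sup>2 \<and> m\<^sup>2*x1\<^sup>2*x2^4 = C\<^sup>2*Q\<^sup>2"
      unfolding Q_def power4_eq_xxxx by (simp add: power2_eq_square algebra_simps)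
  qed
  then show ?thesis
    using True Gws_at_rest_eq_0_iff[OF assms, of x1 x2 C m] by (simp add: fixed_point_def Q_def)
qed (auto simp: fixed_point_def)

context
  fixes a C m x1 x2 :: real
  assumes a_nz: "a \<noteq> 0" and fixed: "fixed_point (Gws a C m) (x1, x2)"
begin

private lemma x1_nz: "x1 \<noteq> 0" and x2_nz: "x2 \<noteq> 0"
  and x1_sq: "x1\<^sup>2 = (2*C*m)\<^sup>2" and x2_sq: "x2\<^sup>2 = (2*C*a)\<^sup>2"
  using fixed fixed_point_Gws_iff[OF a_nz] by auto

private lemma balance: "m\<^sup>2*x2\<^sup>2 = a\<^sup>2*x1\<^sup>2"
  by (simp add: x1_sq x2_sq power_mult_distrib mult_ac)

private lemma Q_eq: "a\<^sup>2*x1\<^sup>2 + m\<^sup>2*x2\<^sup>2 = 2*a\<^sup>2*x1\<^sup>2"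
  using balance by simp

private lemma denom_eq: "2*a\<^sup>2*x1\<^sup>2 + 2*m\<^sup>2*x2\<^sup>2 = 2*(2*a\<^sup>2*x1\<^sup>2)"
  using balance by simp

private lemma denom_nz: "2*a\<^sup>2*x1\<^sup>2 + 2*m\<^sup>2*x2\<^sup>2 \<noteq> 0"
  unfolding denom_eq using a_nz x1_nz by simp

private lemma m_sq: "m\<^sup>2 = a\<^sup>2*x1\<^sup>2/x2\<^sup>2"
  using balance x2_nz by (simp add: field_simps)

private lemma C_sq: "C\<^sup>2 = x2\<^sup>2/(4*a\<^sup>2)"
  using x2_sq a_nz by (simp add: field_simps power_mult_distrib)

lemma has_derivative_Gws_1_1:
  "((\<lambda>t. Gws a C m 1 (t, x2) (0, 0)) has_real_derivative 1/(2*x1\<^sup>2)) (at x1)"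
  unfolding Gws_1_at_rest
  apply (rule derivative_eq_intros refl denom_nz)+
  using x1_nz x2_nz apply simp_all
  apply (simp only: Q_eq denom_eq)
  apply (unfold C_sq m_sq)
  apply (simp add: a_nz x1_nz x2_nz field_simps)
  apply algebra
  done

lemma has_derivative_Gws_2_1:
  "((\<lambda>t. Gws a C m 2 (t, x2) (0, 0)) has_real_derivative 0) (at x1)"
  unfolding Gws_2_at_rest
  apply (rule derivative_eq_intros refl denom_nz)+
  using x1_nz x2_nz apply simp_all
  apply (simp only: Q_eq denom_eq)
  apply (unfold C_sq m_sq)
  apply (simp add: a_nz x1_nz x2_nz field_simps)
  done

lemma has_derivative_Gws_2_2:
  "((\<lambda>t. Gws a C m 2 (x1, t) (0, 0)) has_real_derivative m\<^sup>2/(2*x1\<^sup>2)) (at x2)"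
  unfolding Gws_2_at_rest
  apply (rule derivative_eq_intros refl denom_nz)+
  using x1_nz x2_nz apply simp_all
  apply (simp only: Q_eq denom_eq)
  apply (unfold C_sq m_sq)
  apply (simp add: a_nz x1_nz x2_nz field_simps)
  apply algebra
  done

lemma jacobi_stable_Gws:
  "jacobi_stable (Gws a C m) (x1, x2)"
proof -
  have "Pdev (Gws a C m) i j (x1, x2) (0, 0) = - 2 * pdx (Gws a C m i) j (x1, x2) (0, 0)" for i j
    using fixed by (intro Pdev_at_rest Ncoef_Gws_at_rest)
  moreover have "pdx (Gws a C m 1) 1 (x1, x2) (0, 0) = 1/(2*x1\<^sup>2)"
    and "pdx (Gws a C m 2) 1 (x1, x2) (0, 0) = 0"
    and "pdx (Gws a C m 2) 2 (x1, x2) (0, 0) = m\<^sup>2/(2*x1\<^sup>2)"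
    using has_derivative_Gws_1_1 has_derivative_Gws_2_1 has_derivative_Gws_2_2
    by (simp_all add: pdx_def upd2_def comp2_def DERIV_imp_deriv)
  moreover have "m \<noteq> 0"
    using x1_sq x1_nz by auto
  ultimately show ?thesis
    using x1_nz by (intro jacobi_stable_triangular) simp_all
qed

end

lemma nonzero_square_roots:
  "{t :: 'a :: idom. t \<noteq> 0 \<and> t\<^sup>2 = r\<^sup>2} = (if r = 0 then {} else {- r, r})"
  by (auto simp: power2_eq_iff)

lemma card_nonzero_square_roots:
  "card {t :: real. t \<noteq> 0 \<and> t\<^sup>2 = r\<^sup>2} = (if r = 0 then 0 else 2)"
  by (simp add: nonzero_square_roots)

lemma fixed_points_Gws:
  assumes "a \<noteq> 0"
  shows "{x. fixed_point (Gws a C m) x} =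
    {t. t \<noteq> 0 \<and> t\<^sup>2 = (2*C*m)\<^sup>2} \<times> {t. t \<noteq> 0 \<and> t\<^sup>2 = (2*C*a)\<^sup>2}"
  using fixed_point_Gws_iff[OF assms] by auto

lemma card_fixed_points_Gws:
  assumes "a \<noteq> 0"
  shows "card {x. fixed_point (Gws a C m) x} = (if m = 0 \<or> C = 0 then 0 else 4)"
  using assms by (simp add: fixed_points_Gws card_cartesian_product card_nonzero_square_roots)

theorem theorem4p1:
  fixes a C m :: real
  assumes "0 < a\<^sup>2" and "a\<^sup>2 \<le> 1"
  shows "card {x. fixed_point (Gws a C m) x \<and> jacobi_stable (Gws a C m) x} \<notin> {1, 2, 3} \<and>
         (m \<noteq> 0 \<and> C \<noteq> 0 \<and> a\<^sup>2 \<noteq> 1 \<longrightarrow>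
           card {x. fixed_point (Gws a C m) x \<and> jacobi_stable (Gws a C m) x} = 4)"
proof -
  have a_nz: "a \<noteq> 0"
    using assms(1) by auto
  then have "{x. fixed_point (Gws a C m) x \<and> jacobi_stable (Gws a C m) x} = {x. fixed_point (Gws a C m) x}"
    using jacobi_stable_Gws by auto
  then show ?thesis
    using card_fixed_points_Gws[OF a_nz] by simp
qed

end
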